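(* For every integer $n \geq 1$ there is an MSyDS $\mathcal{S}_n$ with two layers and $n$ nodes, in which every local function is a threshold function and every master function is a symmetric Boolean function, such that: the phase space of $\mathcal{S}_n$ contains exactly one cycle, this cycle has length $n+1$, and every transient has length one (i.e., every configuration not on this cycle has its successor on the cycle).
   Context: A multilayer synchronous dynamical system (MSyDS) $\mathcal{S}$ over $\mathbb{B}=\{0,1\}$ with $k\ge 1$ layers consists of: a finite node set $V$ with $n$ nodes; undirected simple graphs $G_i=(V,E_i)$, $1\le i\le k$ (all layers share the node set $V$, edge sets may differ); for each layer $i$ and node $v$ a local function $f_{i,v}$ with output in $\mathbb{B}$ whose inputs are the states of the nodes in the closed neighborhood of $v$ in $G_i$ (namely $v$ and its neighbors in $G_i$); and for each node $v$ a master function $\psi_v:\mathbb{B}^k\to\mathbb{B}$. A configuration is a map $\mathcal{C}:V\to\mathbb{B}$. The successor of $\mathcal{C}$ is the configuration $\mathcal{C}'$ with $\mathcal{C}'(v)=\psi_v(f_{1,v}(\mathcal{C}),\dots,f_{k,v}(\mathcal{C}))$ for every $v$ (synchronous update), where $f_{i,v}(\mathcal{C})$ denotes $f_{i,v}$ evaluated on the states in $\mathcal{C}$ of the closed neighborhood of $v$ in $G_i$. The phase space of $\mathcal{S}$ is the directed graph whose vertices are the $2^n$ configurations, with an arc from each configuration to its successor. A transient is a directed path in the phase space leading to a cycle. For an integer $\tau\ge 0$, the $\tau$-threshold function is the Boolean function that equals 1 iff at least $\tau$ of its inputs equal 1; a threshold function is a $\tau$-threshold function for some $\tau\ge0$.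 A Boolean function is symmetric if its value depends only on the number of 1's among its inputs. *)

theory Defs
  imports Main
begin

text \<open>Nodes are a finite set V of naturals; configurations are maps V -> bool,
  represented as functions nat => bool that are False outside V.\<close>

definition configs :: "nat set \<Rightarrow> (nat \<Rightarrow> bool) set" where
  "configs V = {C. \<forall>v. v \<notin> V \<longrightarrow> \<not> C v}"

definition simple_graph :: "nat set \<Rightarrow> (nat \<Rightarrow> nat \<Rightarrow> bool) \<Rightarrow> bool" where
  "simple_graph V E = (\<forall>u v. E u v \<longrightarrow> u \<in> V \<and> v \<in> V \<and> u \<noteq> v \<and> E v u)"

definition closed_nbhd :: "nat set \<Rightarrow> (nat \<Rightarrow> nat \<Rightarrow> bool) \<Rightarrow> nat \<Rightarrow> nat set" where
  "closed_nbhd V E v = {u \<in> V. u = v \<or> E v u}"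

definition is_local_fn :: "nat set \<Rightarrow> (nat \<Rightarrow> nat \<Rightarrow> bool) \<Rightarrow> nat \<Rightarrow> ((nat \<Rightarrow> bool) \<Rightarrow> bool) \<Rightarrow> bool" where
  "is_local_fn V E v g = (\<forall>C\<in>configs V. \<forall>C'\<in>configs V.
      (\<forall>u\<in>closed_nbhd V E v. C u = C' u) \<longrightarrow> g C = g C')"

definition threshold_local :: "nat set \<Rightarrow> (nat \<Rightarrow> nat \<Rightarrow> bool) \<Rightarrow> nat \<Rightarrow> ((nat \<Rightarrow> bool) \<Rightarrow> bool) \<Rightarrow> bool" where
  "threshold_local V E v g = (\<exists>\<tau>::nat. \<forall>C\<in>configs V.
      g C = (\<tau> \<le> card {u \<in> closed_nbhd V E v. C u}))"

definition symmetric_bool :: "nat \<Rightarrow> (bool list \<Rightarrow> bool) \<Rightarrow> bool" where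
  "symmetric_bool k \<psi> = (\<forall>xs ys. length xs = k \<longrightarrow> length ys = k \<longrightarrow>
      count_list xs True = count_list ys True \<longrightarrow> \<psi> xs = \<psi> ys)"

text \<open>An MSyDS with node set V, k layers with graphs E i, local functions f i v and
  master functions psi v (applied to the list [f 0 v C, ..., f (k-1) v C]).\<close>
definition is_msyds :: "nat set \<Rightarrow> nat \<Rightarrow> (nat \<Rightarrow> nat \<Rightarrow> nat \<Rightarrow> bool)
    \<Rightarrow> (nat \<Rightarrow> nat \<Rightarrow> (nat \<Rightarrow> bool) \<Rightarrow> bool) \<Rightarrow> (nat \<Rightarrow> bool list \<Rightarrow> bool) \<Rightarrow> bool" where
  "is_msyds V k E f \<psi> = (finite V \<and> 1 \<le> k \<and>
     (\<forall>i<k. simple_graph V (E i)) \<and>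
     (\<forall>i<k. \<forall>v\<in>V. is_local_fn V (E i) v (f i v)))"

definition msyds_step :: "nat set \<Rightarrow> nat \<Rightarrow> (nat \<Rightarrow> nat \<Rightarrow> (nat \<Rightarrow> bool) \<Rightarrow> bool)
    \<Rightarrow> (nat \<Rightarrow> bool list \<Rightarrow> bool) \<Rightarrow> (nat \<Rightarrow> bool) \<Rightarrow> (nat \<Rightarrow> bool)" where
  "msyds_step V k f \<psi> C = (\<lambda>v. if v \<in> V then \<psi> v (map (\<lambda>i. f i v C) [0..<k]) else False)"

definition cyclic_configs :: "nat set \<Rightarrow> ((nat \<Rightarrow> bool) \<Rightarrow> (nat \<Rightarrow> bool)) \<Rightarrow> (nat \<Rightarrow> bool) set" where
  "cyclic_configs V step = {C \<in> configs V. \<exists>p>0. (step ^^ p) C = C}"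

end

theory Submission
  imports Defs
begin

text \<open>Both layers are the complete graph, so every local function sees the number c of
  nodes in state 1. Node v has threshold v in the first layer and threshold n in the second,
  and its master function is exclusive or. Hence a configuration with c < n ones is mapped to
  the prefix configuration with ones exactly on the nodes 0, ..., c, while the all-ones
  configuration is mapped to the all-zeros one. Every successor is therefore one of the n + 1
  prefix configurations, and on these the system acts as the counter c \<mapsto> (c + 1) mod (n + 1).\<close>

lemma cyclic_configs_eq_orbit:
  assumes step_configs: "\<And>C. C \<in> configs V \<Longrightarrow> step C \<in> configs V"
    and step_orbit: "\<And>C. C \<in> configs V \<Longrightarrow> step C \<in> range (\<lambda>j. (step ^^ j) C0)"
    and C0: "C0 \<in> configs V"
    and period: "m > 0" "(step ^^ m) C0 = C0"
  shows "cyclic_configs V step = range (\<lambda>j. (step ^^ j) C0)"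
proof
  show "cyclic_configs V step \<subseteq> range (\<lambda>j. (step ^^ j) C0)"
  proof
    fix C assume "C \<in> cyclic_configs V step"
    then obtain p where "p > 0" "(step ^^ p) C = C" "C \<in> configs V"
      by (auto simp: cyclic_configs_def)
    then obtain q where "(step ^^ Suc q) C = C"
      using gr0_conv_Suc by auto
    then have C_eq: "C = step ((step ^^ q) C)"
      by simp
    have "(step ^^ q) C \<in> configs V"
      using \<open>C \<in> configs V\<close> by (induction q) (auto intro: step_configs)
    then show "C \<in> range (\<lambda>j. (step ^^ j) C0)"
      using C_eq step_orbit by metis
  qed
next
  show "range (\<lambda>j. (step ^^ j) C0) \<subseteq> cyclic_configs V step"
  proof clarify
    fix j
    have "(step ^^ j) C0 \<in> configs V"
      using C0 by (induction j) (auto intro: step_configs)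
    moreover have "(step ^^ m) ((step ^^ j) C0) = (step ^^ j) C0"
      by (metis funpow_add o_apply add.commute period(2))
    ultimately show "(step ^^ j) C0 \<in> cyclic_configs V step"
      using period(1) by (auto simp: cyclic_configs_def)
  qed
qed

lemma msyds_step_in_configs: "msyds_step V k f \<psi> C \<in> configs V"
  by (simp add: configs_def msyds_step_def)

lemma msyds_step_two_layers:
  "msyds_step V 2 f \<psi> C = (\<lambda>v. v \<in> V \<and> \<psi> v [f 0 v C, f 1 v C])"
  by (simp add: msyds_step_def fun_eq_iff numeral_2_eq_2)

definition complete_graph :: "nat \<Rightarrow> nat \<Rightarrow> nat \<Rightarrow> bool" where
  "complete_graph n u v \<longleftrightarrow> u < n \<and> v < n \<and> u \<noteq> v"

definition num_ones :: "nat \<Rightarrow> (nat \<Rightarrow> bool) \<Rightarrow> nat" where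
  "num_ones n C = card {u \<in> {0..<n}. C u}"

definition prefix_config :: "nat \<Rightarrow> nat \<Rightarrow> bool" where
  "prefix_config j v \<longleftrightarrow> v < j"

lemma simple_graph_complete_graph: "simple_graph {0..<n} (complete_graph n)"
  by (auto simp: simple_graph_def complete_graph_def)

lemma closed_nbhd_complete_graph:
  "v < n \<Longrightarrow> closed_nbhd {0..<n} (complete_graph n) v = {0..<n}"
  by (auto simp: closed_nbhd_def complete_graph_def)

lemma is_local_fn_complete_graph_num_ones:
  assumes "v < n"
  shows "is_local_fn {0..<n} (complete_graph n) v (\<lambda>C. g (num_ones n C))"
  unfolding is_local_fn_def closed_nbhd_complete_graph[OF assms]
proof (intro ballI impI)
  fix C C' :: "nat \<Rightarrow> bool"
  assume "\<forall>u\<in>{0..<n}. C u = C' u"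
  then have "{u \<in> {0..<n}. C u} = {u \<in> {0..<n}. C' u}" by auto
  then show "g (num_ones n C) = g (num_ones n C')" by (simp add: num_ones_def)
qed

lemma threshold_local_complete_graph_num_ones:
  "v < n \<Longrightarrow> threshold_local {0..<n} (complete_graph n) v (\<lambda>C. \<tau> \<le> num_ones n C)"
  by (auto simp: threshold_local_def closed_nbhd_complete_graph num_ones_def)

lemma num_ones_le: "num_ones n C \<le> n"
proof -
  have "num_ones n C \<le> card {0..<n}"
    unfolding num_ones_def by (intro card_mono) auto
  then show ?thesis by simp
qed

lemma num_ones_prefix_config: "j \<le> n \<Longrightarrow> num_ones n (prefix_config j) = j"
proof -
  assume "j \<le> n"
  then have "{u \<in> {0..<n}. prefix_config j u} = {0..<j}"
    by (auto simp: prefix_config_def)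
  then show ?thesis by (simp add: num_ones_def)
qed

lemma inj_on_prefix_config: "inj_on prefix_config A"
  by (rule inj_onI) (metis prefix_config_def linorder_neqE_nat less_irrefl)

definition counter_threshold :: "nat \<Rightarrow> nat \<Rightarrow> nat \<Rightarrow> nat" where
  "counter_threshold n i v = (if i = 0 then v else n)"

definition counter_local :: "nat \<Rightarrow> nat \<Rightarrow> nat \<Rightarrow> (nat \<Rightarrow> bool) \<Rightarrow> bool" where
  "counter_local n i v = (\<lambda>C. counter_threshold n i v \<le> num_ones n C)"

definition xor2 :: "bool list \<Rightarrow> bool" where
  "xor2 xs \<longleftrightarrow> xs ! 0 \<noteq> xs ! 1"

lemma xor2_iff_count_list:
  assumes "length xs = 2"
  shows "xor2 xs \<longleftrightarrow> count_list xs True = 1"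
proof -
  obtain a b where "xs = [a, b]"
    using assms by (auto simp: numeral_2_eq_2 length_Suc_conv)
  then show ?thesis by (simp add: xor2_def)
qed

lemma symmetric_bool_xor2: "symmetric_bool 2 xor2"
  by (simp add: symmetric_bool_def xor2_iff_count_list)

abbreviation counter_step :: "nat \<Rightarrow> (nat \<Rightarrow> bool) \<Rightarrow> nat \<Rightarrow> bool" where
  "counter_step n \<equiv> msyds_step {0..<n} 2 (counter_local n) (\<lambda>_. xor2)"

lemma is_msyds_counter: "is_msyds {0..<n} 2 (\<lambda>_. complete_graph n) (counter_local n) (\<lambda>_. xor2)"
  unfolding is_msyds_def counter_local_def
  by (simp add: simple_graph_complete_graph is_local_fn_complete_graph_num_ones)

lemma counter_step_eq: "counter_step n C = prefix_config ((num_ones n C + 1) mod (n + 1))"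
  using num_ones_le[of n C]
  by (cases "num_ones n C = n")
    (auto simp: msyds_step_two_layers counter_local_def counter_threshold_def xor2_def
      prefix_config_def fun_eq_iff)

lemma funpow_counter_step_prefix_config:
  "(counter_step n ^^ j) (prefix_config 0) = prefix_config (j mod (n + 1))"
proof (induction j)
  case (Suc j)
  have "j mod (n + 1) \<le> n"
    by (simp add: less_Suc_eq_le)
  then show ?case
    using Suc by (simp add: counter_step_eq num_ones_prefix_config mod_Suc_eq)
qed simp

lemma range_mod_Suc: "range (\<lambda>j. j mod (n + 1)) = {..n :: nat}"
proof
  show "{..n} \<subseteq> range (\<lambda>j. j mod (n + 1))"
  proof
    fix j assume "j \<in> {..n}"
    then have "j = j mod (n + 1)" by simp
    then show "j \<in> range (\<lambda>j. j mod (n + 1))" by (rule range_eqI)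
  qed
qed (auto simp: less_Suc_eq_le)

lemma counter_orbit: "range (\<lambda>j. (counter_step n ^^ j) (prefix_config 0)) = prefix_config ` {..n}"
proof -
  have "range (\<lambda>j. (counter_step n ^^ j) (prefix_config 0))
      = prefix_config ` range (\<lambda>j. j mod (n + 1))"
    by (simp only: funpow_counter_step_prefix_config image_image)
  then show ?thesis
    by (simp only: range_mod_Suc)
qed

lemma cyclic_configs_counter:
  "cyclic_configs {0..<n} (counter_step n) = prefix_config ` {..n}"
  unfolding counter_orbit[symmetric]
proof (rule cyclic_configs_eq_orbit)
  fix C
  show "counter_step n C \<in> configs {0..<n}"
    by (rule msyds_step_in_configs)
  have "(num_ones n C + 1) mod (n + 1) \<in> {..n}"
    by (simp add: less_Suc_eq_le)
  then show "counter_step n C \<in> range (\<lambda>j. (counter_step n ^^ j) (prefix_config 0))"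
    unfolding counter_orbit counter_step_eq by (rule imageI)
next
  show "prefix_config 0 \<in> configs {0..<n}"
    by (simp add: configs_def prefix_config_def)
  show "(counter_step n ^^ (n + 1)) (prefix_config 0) = prefix_config 0"
    by (simp only: funpow_counter_step_prefix_config mod_self)
qed simp

theorem theorem3p1:
  fixes n :: nat
  assumes "n \<ge> 1"
  shows "\<exists>E f \<psi>. is_msyds {0..<n} 2 E f \<psi>
    \<and> (\<forall>i<2. \<forall>v\<in>{0..<n}. threshold_local {0..<n} (E i) v (f i v))
    \<and> (\<forall>v\<in>{0..<n}. symmetric_bool 2 (\<psi> v))
    \<and> (\<exists>C0\<in>cyclic_configs {0..<n} (msyds_step {0..<n} 2 f \<psi>).
          cyclic_configs {0..<n} (msyds_step {0..<n} 2 f \<psi>)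
            = range (\<lambda>j. (msyds_step {0..<n} 2 f \<psi> ^^ j) C0))
    \<and> card (cyclic_configs {0..<n} (msyds_step {0..<n} 2 f \<psi>)) = n + 1
    \<and> (\<forall>C\<in>configs {0..<n}. msyds_step {0..<n} 2 f \<psi> C
          \<in> cyclic_configs {0..<n} (msyds_step {0..<n} 2 f \<psi>))"
proof (intro exI conjI)
  show "is_msyds {0..<n} 2 (\<lambda>_. complete_graph n) (counter_local n) (\<lambda>_. xor2)"
    by (rule is_msyds_counter)
  show "\<forall>i<2. \<forall>v\<in>{0..<n}. threshold_local {0..<n} (complete_graph n) v (counter_local n i v)"
    by (simp add: counter_local_def threshold_local_complete_graph_num_ones)
  show "\<forall>v\<in>{0..<n}. symmetric_bool 2 xor2"
    by (simp add: symmetric_bool_xor2)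
  show "\<exists>C0\<in>cyclic_configs {0..<n} (counter_step n).
      cyclic_configs {0..<n} (counter_step n) = range (\<lambda>j. (counter_step n ^^ j) C0)"
    by (intro bexI[of _ "prefix_config 0"]) (auto simp: cyclic_configs_counter counter_orbit)
  show "card (cyclic_configs {0..<n} (counter_step n)) = n + 1"
    by (simp add: cyclic_configs_counter card_image[OF inj_on_prefix_config])
  show "\<forall>C\<in>configs {0..<n}. counter_step n C \<in> cyclic_configs {0..<n} (counter_step n)"
    by (simp add: cyclic_configs_counter counter_step_eq less_Suc_eq_le)
qed

end
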